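(* Let $G$ be a $g$-barrelled convergence group and $L$ a Hausdorff locally quasi-convex topological group. Then every compact subset of $\Gamma_s(G,L)$ is equicontinuous.
   Context: All groups are abelian. A convergence structure on a set $X$ assigns to each $x$ a collection of filters converging to $x$. This assignment must satisfy three conditions: point ultrafilters converge to their point; finite intersections of filters converging to $x$ converge to $x$; and finer filters of convergent filters converge. Continuity means convergent filters go to convergent filters. A convergence group is an abelian group with a convergence structure such that $\mathcal F\to x$, $\mathcal G\to y$ imply $\mathcal F-\mathcal G\to x-y$. Every topological group is a convergence group, with convergent filters being those finer than the neighbourhood filter. $\mathbb T=\mathbb R/\mathbb Z$, $\mathbb T_+=\rho([-1/4,1/4])$ where $\rho:\mathbb R\to\mathbb T$ is the quotient map. For convergence groups $G,L$, $\Gamma(G,L)$ is the group of continuous homomorphisms, and $\Gamma_s(G,L)$ is $\Gamma(G,L)$ with the topology of pointwise convergence. $\Gamma_s G=\Gamma_s(G,\mathbb T)$. A set $M\subseteq\Gamma(G,L)$ is equicontinuous if for every filter $\mathcal F\to0$ in $G$, the filter generated by $\{\varphi(x):\varphi\in M,x\in F\}$, $F\in\mathcal F$, converges to $0$ in $L$. A convergence group $G$ is $g$-barrelled if every compact subset of $\Gamma_s G$ is equicontinuous. A subset $A$ of a topological group $L$ is quasi-convex if for every $x\notin A$ there is a continuous character $\varphi$ with $\varphi(A)\subseteq\mathbb T_+$ and $\varphi(x)\notin\mathbb T_+$. $L$ is locally quasi-convex if it has a zero neighbourhood base of quasi-convex sets. *)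

theory Defs
  imports "HOL-Analysis.Analysis"
begin

text \<open>In Isabelle, F \<le> G means F is finer than G, and
sup F G is the filter of sets belonging to both (intersection of filters).\<close>

definition convergence_structure :: "('a filter \<Rightarrow> 'a \<Rightarrow> bool) \<Rightarrow> bool" where
  "convergence_structure conv \<longleftrightarrow>
     (\<forall>x. conv (principal {x}) x) \<and>
     (\<forall>F G x. conv F x \<and> conv G x \<longrightarrow> conv (sup F G) x) \<and>
     (\<forall>F G x. conv F x \<and> G \<le> F \<longrightarrow> conv G x)"

definition convergence_group :: "('a::ab_group_add filter \<Rightarrow> 'a \<Rightarrow> bool) \<Rightarrow> bool" where
  "convergence_group conv \<longleftrightarrow> convergence_structure conv \<and>
     (\<forall>F G x y. conv F x \<and> conv G y \<longrightarrow>
        conv (filtermap (\<lambda>(a, b). a - b) (F \<times>\<^sub>F G)) (x - y))"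

definition topological_ab_group :: "'a::{ab_group_add, topological_space} itself \<Rightarrow> bool" where
  "topological_ab_group _ \<longleftrightarrow> continuous_on (UNIV :: ('a \<times> 'a) set) (\<lambda>p. fst p - snd p)"

text \<open>The circle group T = R/Z is modelled (isomorphically, via t \<mapsto> exp(2 pi i t))
as the multiplicative unit circle in the complex plane with its usual topology.
T_+ = rho([-1/4,1/4]) corresponds to the closed right half of the circle.\<close>

definition Tcirc :: "complex set" where
  "Tcirc = {z. cmod z = 1}"

definition Tplus :: "complex set" where
  "Tplus = {z. cmod z = 1 \<and> Re z \<ge> 0}"

definition Gamma_hom :: "('g::ab_group_add filter \<Rightarrow> 'g \<Rightarrow> bool) \<Rightarrow> ('g \<Rightarrow> 'l::{ab_group_add, topological_space}) set" where
  "Gamma_hom conv = {\<phi>. (\<forall>x y. \<phi> (x + y) = \<phi> x + \<phi> y) \<and>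
                    (\<forall>F x. conv F x \<longrightarrow> filtermap \<phi> F \<le> nhds (\<phi> x))}"

definition Gamma_T :: "('g::ab_group_add filter \<Rightarrow> 'g \<Rightarrow> bool) \<Rightarrow> ('g \<Rightarrow> complex) set" where
  "Gamma_T conv = {\<phi>. (\<forall>x. \<phi> x \<in> Tcirc) \<and> (\<forall>x y. \<phi> (x + y) = \<phi> x * \<phi> y) \<and>
                    (\<forall>F x. conv F x \<longrightarrow> filtermap \<phi> F \<le> nhds (\<phi> x))}"

definition equicontinuous ::
  "('g::ab_group_add filter \<Rightarrow> 'g \<Rightarrow> bool) \<Rightarrow> 'l::topological_space \<Rightarrow> ('g \<Rightarrow> 'l) set \<Rightarrow> bool" where
  "equicontinuous conv e M \<longleftrightarrow>
     (\<forall>F. conv F 0 \<longrightarrow> filtermap (\<lambda>(\<phi>, x). \<phi> x) (principal M \<times>\<^sub>F F) \<le> nhds e)"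

text \<open>g-barrelled: every compact subset of Gamma_s G (pointwise topology = product
topology on the function type) is equicontinuous.\<close>
definition g_barrelled :: "('g::ab_group_add filter \<Rightarrow> 'g \<Rightarrow> bool) \<Rightarrow> bool" where
  "g_barrelled conv \<longleftrightarrow>
     (\<forall>M. M \<subseteq> Gamma_T conv \<and> compact M \<longrightarrow> equicontinuous conv 1 M)"

definition characters :: "('l::{ab_group_add, topological_space} \<Rightarrow> complex) set" where
  "characters = {\<psi>. (\<forall>x. \<psi> x \<in> Tcirc) \<and> (\<forall>x y. \<psi> (x + y) = \<psi> x * \<psi> y) \<and>
                      continuous_on UNIV \<psi>}"

definition quasi_convex :: "'l::{ab_group_add, topological_space} set \<Rightarrow> bool" where
  "quasi_convex A \<longleftrightarrow>
     (\<forall>x. x \<notin> A \<longrightarrow> (\<exists>\<psi>\<in>characters. \<psi> ` A \<subseteq> Tplus \<and> \<psi> x \<notin> Tplus))"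

definition locally_quasi_convex :: "'l::{ab_group_add, topological_space} itself \<Rightarrow> bool" where
  "locally_quasi_convex _ \<longleftrightarrow>
     (\<forall>U::'l set. open U \<and> 0 \<in> U \<longrightarrow>
        (\<exists>A. quasi_convex A \<and> 0 \<in> interior A \<and> A \<subseteq> U))"

end

theory Submission
  imports Defs
begin

text \<open>
  Let U be a zero neighbourhood of L and choose a quasi-convex A \<subseteq> U that is
  itself a zero neighbourhood.  Its polar, the set of all homomorphisms L \<rightarrow> T sending A into
  T_+, is compact for pointwise convergence, and it is equicontinuous: if x, 2x, ..., 2^m x all
  lie in A then every polar character is within O(2^(-m/2)) of 1 at x.  Equicontinuity makes
  the composition map (\<psi>, \<phi>) \<mapsto> \<psi> \<circ> \<phi> jointly continuous for pointwise convergence, so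
  K = {\<psi> \<circ> \<phi> | \<psi> in the polar of A, \<phi> \<in> M} is a compact set of continuous characters of G.
  By g-barrelledness K is equicontinuous, so for F \<rightarrow> 0 eventually all values k x (k \<in> K) lie
  in the open right half plane, i.e. in T_+.  Quasi-convexity of A then forces \<phi> x \<in> A \<subseteq> U.
\<close>

section \<open>Estimates on the unit circle\<close>

lemma one_minus_Re_le_half_square:
  fixes z :: complex
  assumes "cmod z = 1" "Re z \<ge> 0"
  shows "1 - Re z \<le> (1 - Re (z^2)) / 2"
proof -
  have unit: "(Re z)^2 + (Im z)^2 = 1" using assms(1)
    by (metis cmod_power2 one_power2)
  have square: "Re (z^2) = 2 * (Re z)^2 - 1" using unit by (simp add: power2_eq_square)
  have "Re z \<le> 1" using assms(1) complex_Re_le_cmod by metis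
  hence "(Re z)^2 \<le> Re z" using assms(2) by (simp add: power2_eq_square mult_left_le_one_le)
  thus ?thesis using square by simp
qed

lemma one_minus_Re_le_if_iterated_squares_right:
  fixes z :: complex
  assumes "cmod z = 1" "\<forall>j\<le>m. Re (z^(2^j)) \<ge> 0"
  shows "1 - Re z \<le> 2 / 2^m"
  using assms
proof (induction m arbitrary: z)
  case 0
  have "- 1 \<le> Re z" using 0(1) abs_Re_le_cmod[of z] by simp
  thus ?case by simp
next
  case (Suc m)
  have unit: "cmod (z^2) = 1" using Suc.prems(1) by (simp add: norm_power)
  have "\<forall>j\<le>m. Re ((z^2)^(2^j)) \<ge> 0"
  proof (intro allI impI)
    fix j assume "j \<le> m"
    hence "Re (z^(2^Suc j)) \<ge> 0" using Suc.prems(2) by auto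
    thus "Re ((z^2)^(2^j)) \<ge> 0" by (simp add: power_mult[symmetric] mult.commute)
  qed
  with Suc.IH[OF unit] have "1 - Re (z^2) \<le> 2 / 2^m" by blast
  moreover have "Re z \<ge> 0" using Suc.prems(2)[rule_format, of 0] by simp
  hence "1 - Re z \<le> (1 - Re (z^2)) / 2"
    using one_minus_Re_le_half_square[OF Suc.prems(1)] by blast
  ultimately have "1 - Re z \<le> (2 / 2^m) / 2"
    using divide_right_mono[of "1 - Re (z^2)" "2 / 2^m" 2] by linarith
  thus ?case by simp
qed

lemma cmod_minus_one_squared:
  fixes z :: complex
  assumes "cmod z = 1"
  shows "(cmod (z - 1))^2 = 2 - 2 * Re z"
proof -
  have unit: "(Re z)^2 + (Im z)^2 = 1" using assms
    by (metis cmod_power2 one_power2)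
  have "(cmod (z - 1))^2 = (Re z - 1)^2 + (Im z)^2" by (simp add: cmod_power2)
  also have "\<dots> = 2 - 2 * Re z" using unit by (simp add: power2_eq_square algebra_simps)
  finally show ?thesis .
qed

lemma unimodular_hom_dist:
  fixes \<psi> :: "'a::ab_group_add \<Rightarrow> complex"
  assumes hom: "\<forall>x y. \<psi> (x + y) = \<psi> x * \<psi> y" and unit: "\<forall>x. cmod (\<psi> x) = 1"
  shows "dist (\<psi> y) (\<psi> a) = cmod (\<psi> (y - a) - 1)"
proof -
  have "\<psi> y = \<psi> (y - a) * \<psi> a" using hom[rule_format, of "y - a" a] by simp
  hence "dist (\<psi> y) (\<psi> a) = cmod ((\<psi> (y - a) - 1) * \<psi> a)"
    by (simp add: dist_norm algebra_simps)
  also have "\<dots> = cmod (\<psi> (y - a) - 1)" using unit by (simp add: norm_mult)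
  finally show ?thesis .
qed

lemma hom_iterated_double:
  assumes "\<forall>x y. \<psi> (x + y) = \<psi> x * (\<psi> y :: complex)"
  shows "\<psi> (((\<lambda>v. v + v)^^j) v) = \<psi> v ^ (2^j)"
proof (induction j)
  case 0 then show ?case by simp
next
  case (Suc j)
  have "\<psi> (((\<lambda>v. v + v)^^Suc j) v) = \<psi> (((\<lambda>v. v + v)^^j) v) * \<psi> (((\<lambda>v. v + v)^^j) v)"
    using assms by simp
  also have "\<dots> = \<psi> v ^ (2^Suc j)"
    using Suc by (simp add: power_mult[symmetric] power2_eq_square[symmetric] mult.commute)
  finally show ?case .
qed

section \<open>Limits in topological groups\<close>

lemma tendsto_diff_topological_ab_group:
  fixes f g :: "'a \<Rightarrow> 'l::{ab_group_add, topological_space}"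
  assumes "topological_ab_group TYPE('l)" "(f \<longlongrightarrow> a) F" "(g \<longlongrightarrow> b) F"
  shows "((\<lambda>x. f x - g x) \<longlongrightarrow> a - b) F"
proof -
  have "continuous_on UNIV (\<lambda>p::'l\<times>'l. fst p - snd p)"
    using assms(1) unfolding topological_ab_group_def .
  from continuous_on_tendsto_compose[OF this tendsto_Pair[OF assms(2,3)]] show ?thesis by simp
qed

lemma tendsto_add_topological_ab_group:
  fixes f g :: "'a \<Rightarrow> 'l::{ab_group_add, topological_space}"
  assumes "topological_ab_group TYPE('l)" "(f \<longlongrightarrow> a) F" "(g \<longlongrightarrow> b) F"
  shows "((\<lambda>x. f x + g x) \<longlongrightarrow> a + b) F"
proof -
  have "((\<lambda>x. 0 - g x) \<longlongrightarrow> 0 - b) F"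
    using tendsto_diff_topological_ab_group[OF assms(1) tendsto_const assms(3)] .
  from tendsto_diff_topological_ab_group[OF assms(1) assms(2) this] show ?thesis by simp
qed

lemma tendsto_iterated_double_zero:
  fixes f :: "'a \<Rightarrow> 'l::{ab_group_add, topological_space}"
  assumes "topological_ab_group TYPE('l)" "(f \<longlongrightarrow> 0) F"
  shows "((\<lambda>x. ((\<lambda>v. v + v)^^j) (f x)) \<longlongrightarrow> 0) F"
proof (induction j)
  case 0 then show ?case using assms(2) by simp
next
  case (Suc j)
  from tendsto_add_topological_ab_group[OF assms(1) Suc Suc] show ?case by simp
qed

section \<open>Polars of zero neighbourhoods\<close>

text \<open>The polar of A: all (not necessarily continuous) homomorphisms into the circle that map
  A into T_+.  When A is a zero neighbourhood they turn out to be continuous.\<close>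
definition polar :: "'l::ab_group_add set \<Rightarrow> ('l \<Rightarrow> complex) set" where
  "polar A = {\<psi>. (\<forall>x. \<psi> x \<in> Tcirc) \<and> (\<forall>x y. \<psi> (x + y) = \<psi> x * \<psi> y) \<and> \<psi> ` A \<subseteq> Tplus}"

lemma polar_memD:
  assumes "\<psi> \<in> polar A"
  shows "\<forall>x y. \<psi> (x + y) = \<psi> x * \<psi> y" "\<forall>x. cmod (\<psi> x) = 1" "\<psi> ` A \<subseteq> Tplus"
  using assms by (auto simp: polar_def Tcirc_def)

text \<open>The reason is that
  f x, 2 f x, ..., 2^m f x eventually all lie in A.\<close>
lemma polar_uniformly_near_one:
  fixes f :: "'a \<Rightarrow> 'l::{ab_group_add, topological_space}"
  assumes tg: "topological_ab_group TYPE('l)" and A: "0 \<in> interior A"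
    and f: "(f \<longlongrightarrow> 0) F" and e: "e > 0"
  shows "eventually (\<lambda>x. \<forall>\<psi>\<in>polar A. cmod (\<psi> (f x) - 1) < e) F"
proof -
  obtain m :: nat where m: "4 / e^2 < 2^m" using real_arch_pow[of 2 "4 / e^2"] by auto
  have "\<forall>j\<in>{..m}. eventually (\<lambda>x. ((\<lambda>v. v + v)^^j) (f x) \<in> interior A) F"
    using topological_tendstoD[OF tendsto_iterated_double_zero[OF tg f] open_interior A] by blast
  hence "eventually (\<lambda>x. \<forall>j\<in>{..m}. ((\<lambda>v. v + v)^^j) (f x) \<in> interior A) F"
    by (simp add: eventually_ball_finite)
  hence doubles_in_A: "eventually (\<lambda>x. \<forall>j\<le>m. ((\<lambda>v. v + v)^^j) (f x) \<in> A) F"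
    by (rule eventually_mono) (use interior_subset in auto)
  show ?thesis
  proof (rule eventually_mono[OF doubles_in_A], intro ballI)
    fix x \<psi> assume doubles: "\<forall>j\<le>m. ((\<lambda>v. v + v)^^j) (f x) \<in> A" and p: "\<psi> \<in> polar A"
    note hom = polar_memD(1)[OF p] and unit = polar_memD(2)[OF p]
    have "\<forall>j\<le>m. Re (\<psi> (f x) ^ (2^j)) \<ge> 0"
    proof (intro allI impI)
      fix j assume "j \<le> m"
      hence "\<psi> (((\<lambda>v. v + v)^^j) (f x)) \<in> Tplus" using doubles polar_memD(3)[OF p] by blast
      thus "Re (\<psi> (f x) ^ (2^j)) \<ge> 0" by (simp add: hom_iterated_double[OF hom] Tplus_def)
    qed
    hence "1 - Re (\<psi> (f x)) \<le> 2 / 2^m"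
      using one_minus_Re_le_if_iterated_squares_right unit by blast
    hence "(cmod (\<psi> (f x) - 1))^2 \<le> 4 / 2^m" using cmod_minus_one_squared unit by simp
    also have "4 / 2^m < e^2" using m e by (simp add: field_simps)
    finally show "cmod (\<psi> (f x) - 1) < e" using e by (simp add: power_less_imp_less_base)
  qed
qed

lemma polar_continuous:
  fixes A :: "'l::{ab_group_add, topological_space} set"
  assumes tg: "topological_ab_group TYPE('l)" and A: "0 \<in> interior A" and p: "\<psi> \<in> polar A"
  shows "continuous_on UNIV \<psi>"
proof -
  have "(\<psi> \<longlongrightarrow> \<psi> a) (at a)" for a
  proof (rule tendstoI)
    fix e :: real assume e: "e > 0"
    have "((\<lambda>y. y - a) \<longlongrightarrow> 0) (at a)"
      using tendsto_diff_topological_ab_group[OF tg tendsto_ident_at tendsto_const, of a a] by simp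
    from polar_uniformly_near_one[OF tg A this e]
    show "eventually (\<lambda>y. dist (\<psi> y) (\<psi> a) < e) (at a)"
      using p unimodular_hom_dist[OF polar_memD(1,2)[OF p]] by (auto elim!: eventually_mono)
  qed
  thus ?thesis by (simp add: continuous_on_def)
qed

text \<open>The polar is compact for pointwise convergence (product topology on the function
  space): it is a closed subset of the compact product of circles.\<close>
lemma polar_compact: "compact (polar (A :: 'l::ab_group_add set))"
proof -
  have "compact Tcirc"
    using compact_sphere[of "0::complex" 1] by (simp add: Tcirc_def sphere_def)
  hence "compactin (product_topology (\<lambda>_. euclidean) UNIV) (PiE (UNIV::'l set) (\<lambda>_. Tcirc))"
    unfolding compactin_PiE by simp
  hence circle_valued: "compact {f :: 'l \<Rightarrow> complex. \<forall>x. f x \<in> Tcirc}"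
    by (simp add: euclidean_product_topology PiE_UNIV_domain Pi_def)
  have "closed {f :: 'l \<Rightarrow> complex. f (x + y) = f x * f y}" for x y
    by (intro closed_Collect_eq continuous_intros continuous_on_product_coordinates)
  hence homs: "closed {f :: 'l \<Rightarrow> complex. \<forall>x y. f (x + y) = f x * f y}"
    using closed_INT[of UNIV "\<lambda>x. \<Inter>y. {f :: 'l \<Rightarrow> complex. f (x + y) = f x * f y}"]
    by (simp add: closed_INT Collect_all_eq)
  have "closed Tplus" unfolding Tplus_def
    using closed_Int[OF closed_Collect_eq[of cmod "\<lambda>_. 1"] closed_halfspace_Re_ge[of 0]]
    by (simp add: continuous_on_norm_id Collect_conj_eq)
  hence "closed {f :: 'l \<Rightarrow> complex. f a \<in> Tplus}" for a
    using closed_vimage[of Tplus "\<lambda>f::'l\<Rightarrow>complex. f a"] by (simp add: vimage_def)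
  hence into_Tplus: "closed {f :: 'l \<Rightarrow> complex. f ` A \<subseteq> Tplus}"
    using closed_INT[of A "\<lambda>a. {f :: 'l \<Rightarrow> complex. f a \<in> Tplus}"]
    by (simp add: image_subset_iff Collect_ball_eq)
  have "polar A = {f. \<forall>x. f x \<in> Tcirc} \<inter> ({f. \<forall>x y. f (x + y) = f x * f y} \<inter> {f. f ` A \<subseteq> Tplus})"
    by (auto simp: polar_def)
  thus ?thesis using compact_Int_closed[OF circle_valued closed_Int[OF homs into_Tplus]] by simp
qed

lemma tendsto_coordinate:
  "(f \<longlongrightarrow> a) F \<Longrightarrow> ((\<lambda>x. f x c) \<longlongrightarrow> a c) F" for f :: "'x \<Rightarrow> 'a \<Rightarrow> 'b::topological_space"
  using continuous_on_tendsto_compose[OF continuous_on_product_coordinates[of c]] by simp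

text \<open>Since the polar of a zero neighbourhood is equicontinuous, composition
  (\<psi>, \<phi>) \<mapsto> \<psi> \<circ> \<phi> is jointly continuous for pointwise convergence:
  |\<psi>(\<phi> g) - \<psi>0(\<phi>0 g)| \<le> |\<psi>(\<phi> g - \<phi>0 g) - 1| + |\<psi>(\<phi>0 g) - \<psi>0(\<phi>0 g)|.\<close>
lemma polar_composition_continuous:
  fixes A :: "'l::{ab_group_add, topological_space} set" and M :: "('g \<Rightarrow> 'l) set"
  assumes tg: "topological_ab_group TYPE('l)" and A: "0 \<in> interior A"
  shows "continuous_on (polar A \<times> M) (\<lambda>p. fst p \<circ> snd p)"
proof (intro continuous_on_coordinatewise_then_product)
  fix g
  show "continuous_on (polar A \<times> M) (\<lambda>p. (fst p \<circ> snd p) g)"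
    unfolding continuous_on_def
  proof (intro ballI)
    fix p assume "p \<in> polar A \<times> M"
    obtain \<psi>0 \<phi>0 where p: "p = (\<psi>0, \<phi>0)" by (cases p)
    let ?F = "at p within polar A \<times> M"
    have outer: "((\<lambda>q. fst q (\<phi>0 g)) \<longlongrightarrow> \<psi>0 (\<phi>0 g)) ?F"
      using tendsto_coordinate[OF tendsto_fst[OF tendsto_ident_at[of p]]] p by simp
    have "((\<lambda>q. snd q g) \<longlongrightarrow> \<phi>0 g) ?F"
      using tendsto_coordinate[OF tendsto_snd[OF tendsto_ident_at[of p]]] p by simp
    hence inner: "((\<lambda>q. snd q g - \<phi>0 g) \<longlongrightarrow> 0) ?F"
      using tendsto_diff_topological_ab_group[OF tg _ tendsto_const[of "\<phi>0 g"]] by fastforce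
    show "((\<lambda>p. (fst p \<circ> snd p) g) \<longlongrightarrow> (fst p \<circ> snd p) g) ?F"
    proof (rule tendstoI)
      fix e :: real assume "e > 0"
      hence e2: "e / 2 > 0" by simp
      have "eventually (\<lambda>q. q \<in> polar A \<times> M) ?F"
        by (simp add: eventually_at_filter)
      with tendstoD[OF outer e2] polar_uniformly_near_one[OF tg A inner e2]
      show "eventually (\<lambda>q. dist ((fst q \<circ> snd q) g) ((fst p \<circ> snd p) g) < e) ?F"
      proof eventually_elim
        case (elim q)
        obtain \<psi> \<phi> where q: "q = (\<psi>, \<phi>)" by (cases q)
        have "\<psi> \<in> polar A" using elim q by auto
        hence "dist (\<psi> (\<phi> g)) (\<psi> (\<phi>0 g)) = cmod (\<psi> (\<phi> g - \<phi>0 g) - 1)"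
          by (intro unimodular_hom_dist polar_memD)
        hence "dist (\<psi> (\<phi> g)) (\<psi> (\<phi>0 g)) < e / 2"
          using elim q \<open>\<psi> \<in> polar A\<close> by auto
        moreover have "dist (\<psi> (\<phi>0 g)) (\<psi>0 (\<phi>0 g)) < e / 2" using elim q by simp
        ultimately show ?case
          using dist_triangle[of "\<psi> (\<phi> g)" "\<psi>0 (\<phi>0 g)" "\<psi> (\<phi>0 g)"] p q by simp
      qed
    qed
  qed
qed

lemma polar_comp_Gamma_hom:
  fixes \<phi> :: "'g::ab_group_add \<Rightarrow> 'l::{ab_group_add, topological_space}"
  assumes tg: "topological_ab_group TYPE('l)" and A: "0 \<in> interior A"
    and p: "\<psi> \<in> polar A" and ph: "\<phi> \<in> Gamma_hom conv"
  shows "\<psi> \<circ> \<phi> \<in> Gamma_T conv"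
proof -
  have "filtermap (\<psi> \<circ> \<phi>) G \<le> nhds (\<psi> (\<phi> x))" if "conv G x" for G x
  proof -
    have "(\<phi> \<longlongrightarrow> \<phi> x) G" using ph that by (simp add: Gamma_hom_def filterlim_def)
    from continuous_on_tendsto_compose[OF polar_continuous[OF tg A p] this]
    show ?thesis by (simp add: filterlim_def comp_def)
  qed
  thus ?thesis using p ph by (simp add: Gamma_T_def Gamma_hom_def polar_def)
qed

lemma quasi_convex_mem_if_polar_positive:
  assumes "quasi_convex A" and pos: "\<forall>\<psi>\<in>polar A. Re (\<psi> y) > 0"
  shows "y \<in> A"
proof (rule ccontr)
  assume "y \<notin> A"
  then obtain \<psi> where ch: "\<psi> \<in> characters" and "\<psi> ` A \<subseteq> Tplus" and out: "\<psi> y \<notin> Tplus"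
    using assms(1) unfolding quasi_convex_def by blast
  hence "\<psi> \<in> polar A" by (simp add: characters_def polar_def)
  hence "Re (\<psi> y) > 0" using pos by blast
  with ch out show False by (simp add: characters_def Tplus_def Tcirc_def)
qed

lemma compact_hom_set_eventually_in_quasi_convex:
  fixes conv :: "'g::ab_group_add filter \<Rightarrow> 'g \<Rightarrow> bool"
  assumes barrelled: "g_barrelled conv" and tg: "topological_ab_group TYPE('l)"
    and M: "M \<subseteq> (Gamma_hom conv :: ('g \<Rightarrow> 'l::{ab_group_add, topological_space}) set)"
    "compact M"
    and qc: "quasi_convex A" and A: "0 \<in> interior A" and F: "conv F 0"
  shows "eventually (\<lambda>(\<phi>, x). \<phi> x \<in> A) (principal M \<times>\<^sub>F F)"
proof -
  define K where "K = (\<lambda>p. fst p \<circ> snd p) ` (polar A \<times> M)"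
  have "compact K" unfolding K_def
    by (rule compact_continuous_image[OF polar_composition_continuous[OF tg A]
          compact_Times[OF polar_compact M(2)]])
  moreover have "K \<subseteq> Gamma_T conv"
    unfolding K_def using M(1) by (auto intro!: polar_comp_Gamma_hom[OF tg A])
  ultimately have "equicontinuous conv 1 K" using barrelled unfolding g_barrelled_def by blast
  hence "((\<lambda>(k, x). k x) \<longlongrightarrow> (1::complex)) (principal K \<times>\<^sub>F F)"
    using F unfolding equicontinuous_def by (simp add: filterlim_def)
  from topological_tendstoD[OF this open_halfspace_Re_gt[of 0]]
  obtain Q P where "eventually Q (principal K)" and P: "eventually P F"
    and QP: "\<forall>k x. Q k \<longrightarrow> P x \<longrightarrow> Re (k x) > 0"
    unfolding eventually_prod_filter by auto
  hence pos: "\<forall>k\<in>K. \<forall>x. P x \<longrightarrow> Re (k x) > 0" by (simp add: eventually_principal)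
  have "\<phi> x \<in> A" if "\<phi> \<in> M" "P x" for \<phi> x
  proof (rule quasi_convex_mem_if_polar_positive[OF qc], intro ballI)
    fix \<psi> assume "\<psi> \<in> polar A"
    hence "\<psi> \<circ> \<phi> \<in> K" unfolding K_def using that(1) by force
    thus "Re (\<psi> (\<phi> x)) > 0" using pos that(2) by auto
  qed
  thus ?thesis
    unfolding eventually_prod_filter
    by (intro exI[of _ "\<lambda>\<phi>. \<phi> \<in> M"] exI[of _ P]) (simp add: P eventually_principal)
qed

theorem theorem2p15:
  fixes conv :: "'g::ab_group_add filter \<Rightarrow> 'g \<Rightarrow> bool"
  assumes "convergence_group conv"
    and "g_barrelled conv"
    and "topological_ab_group TYPE('l::{ab_group_add, t2_space})"
    and "locally_quasi_convex TYPE('l)"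
    and "M \<subseteq> (Gamma_hom conv :: ('g \<Rightarrow> 'l) set)"
    and "compact M"
  shows "equicontinuous conv 0 M"
  unfolding equicontinuous_def
proof (intro allI impI)
  fix F assume F: "conv F 0"
  have "((\<lambda>(\<phi>, x). \<phi> x) \<longlongrightarrow> (0::'l)) (principal M \<times>\<^sub>F F)"
  proof (rule topological_tendstoI)
    fix U :: "'l set" assume "open U" "0 \<in> U"
    then obtain A where qc: "quasi_convex A" and A: "0 \<in> interior A" and "A \<subseteq> U"
      using assms(4) unfolding locally_quasi_convex_def by blast
    from compact_hom_set_eventually_in_quasi_convex[OF assms(2,3,5,6) qc A F]
    show "eventually (\<lambda>p. (case p of (\<phi>, x) \<Rightarrow> \<phi> x) \<in> U) (principal M \<times>\<^sub>F F)"
      by (rule eventually_mono) (use \<open>A \<subseteq> U\<close> in auto)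
  qed
  thus "filtermap (\<lambda>(\<phi>, x). \<phi> x) (principal M \<times>\<^sub>F F) \<le> nhds 0" by (simp add: filterlim_def)
qed

end
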